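(* Let $p\equiv 5\pmod 6$ be a prime, let $n$ be the multiplicative order of $2$ modulo $p$, and let $e$ be the multiplicative order of $p$ modulo $3n$. Then $e=2$. *)

theory Defs
  imports "HOL-Number_Theory.Number_Theory"
begin

end

theory Submission
  imports Defs
begin

text \<open>Since \<open>p \<equiv> 2 (mod 3)\<close> and \<open>ord p 2\<close> divides \<open>p - 1\<close> by Fermat,
  the modulus \<open>3 * ord p 2\<close> divides \<open>(p - 1) * (p + 1) = p\<^sup>2 - 1\<close>; so \<open>p\<close> has order
  dividing 2 modulo it, and not order 1, because \<open>p \<not>\<equiv> 1 (mod 3)\<close>.\<close>

lemma ord_eq_2:
  fixes a m :: nat
  assumes "[a ^ 2 = 1] (mod m)" and "\<not> [a = 1] (mod m)"
  shows "ord m a = 2"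
proof -
  have "coprime (a ^ 2) m"
    by (rule cong_imp_coprime[OF cong_sym[OF assms(1)]]) simp
  then have "ord m a \<noteq> 0"
    by (simp add: ord_eq_0 coprime_commute)
  moreover have "ord m a \<noteq> 1"
    using assms(2) ord_eq_Suc_0_iff by simp
  moreover have "ord m a dvd 2"
    using assms(1) ord_divides by blast
  ultimately show ?thesis
    using dvd_imp_le[of "ord m a" 2] by linarith
qed

lemma ord_dvd_prime_minus_1:
  fixes p a :: nat
  assumes "prime p" and "\<not> p dvd a"
  shows "ord p a dvd p - 1"
  using fermat_theorem[OF assms] ord_divides by blast

lemma three_times_ord_2_dvd_square_minus_1:
  fixes p :: nat
  assumes "prime p" and "odd p" and "[p = 2] (mod 3)"
  shows "3 * ord p 2 dvd p\<^sup>2 - 1"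
proof -
  have "\<not> p dvd 2"
  proof
    assume "p dvd 2"
    then have "p \<le> 2"
      by (rule dvd_imp_le) simp
    with prime_ge_2_nat[OF assms(1)] have "p = 2"
      by linarith
    with assms(2) show False
      by simp
  qed
  then have "ord p 2 dvd p - 1"
    by (rule ord_dvd_prime_minus_1[OF assms(1)])
  moreover have "3 dvd p + 1"
    using assms(3) unfolding cong_def by presburger
  ultimately have "ord p 2 * 3 dvd (p - 1) * (p + 1)"
    by (rule mult_dvd_mono)
  also have "(p - 1) * (p + 1) = p\<^sup>2 - 1"
    using prime_gt_0_nat[OF assms(1)] by (cases p) (simp_all add: power2_eq_square)
  finally show ?thesis
    by (simp add: mult.commute)
qed

theorem proposition3p11:
  fixes p n e :: nat
  assumes "prime p"
    and "[p = 5] (mod 6)"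
    and "n = ord p 2"
    and "e = ord (3 * n) p"
  shows "e = 2"
proof -
  have "p mod 6 = 5"
    using assms(2) unfolding cong_def by simp
  then have p_mod_3: "[p = 2] (mod 3)" and "odd p"
    unfolding cong_def by presburger+
  then have "3 * n dvd p\<^sup>2 - 1"
    using three_times_ord_2_dvd_square_minus_1 assms(1,3) by blast
  then have "[p\<^sup>2 = 1] (mod 3 * n)"
    using prime_gt_0_nat[OF assms(1)] by (simp add: cong_altdef_nat)
  moreover have "\<not> [p = 1] (mod 3 * n)"
  proof
    assume "[p = 1] (mod 3 * n)"
    then have "[p = 1] (mod 3)"
      by (rule cong_modulus_mult_nat)
    with p_mod_3 show False
      by (simp add: cong_def)
  qed
  ultimately show ?thesis
    using ord_eq_2 assms(4) by blast
qed

end
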